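(* Assume the time-triggered learning rule with integer parameter $a\ge2$ and conditions (i) $\mathcal{S}(\theta_p,\theta_q)\ne\emptyset$ for all distinct $\theta_p,\theta_q\in\Theta$, (ii) $\mathcal{G}$ strongly connected, (iii) $\pi_{i,0}(\theta)>0,\mu_{i,0}(\theta)>0$ for all $i,\theta$. Let $\theta\in\Theta\setminus\{\theta^\star\}$ and $v\in\mathcal{S}(\theta^\star,\theta)$. Then for each agent $i\in\mathcal{V}$, $$\liminf_{t\to\infty}-\frac{\log\mu_{i,t}(\theta)}{t}\ \ge\ \frac{K_v(\theta^\star,\theta)}{a^{\,d(v,i)+1}}\quad\text{a.s.}$$
   Context: Agents $\mathcal{V}=\{1,\dots,n\}$ interact over a directed graph $\mathcal{G}=(\mathcal{V},\mathcal{E})$; $(j,i)\in\mathcal{E}$ means $j$ can send to $i$, and $\mathcal{N}_i=\{j:(j,i)\in\mathcal{E}\}$; $d(v,i)$ is the length of a shortest directed path from $v$ to $i$ ($d(i,i)=0$). $\Theta=\{\theta_1,\dots,\theta_m\}$ finite hypotheses, $\theta^\star$ the fixed true state. Agent $i$ has finite signal space $\mathcal{S}_i$ and known marginals $l_i(\cdot|\theta)$ of joint likelihoods $l(\cdot|\theta)$ on $\prod_i\mathcal{S}_i$, with $l_i(w_i|\theta)>0$ for all $w_i,\theta$. Profiles $s_t$ ($t\in\mathbb{N}_+$) are i.i.d. over time with law $l(\cdot|\theta^\star)$; "a.s." is w.r.t. the product measure $\mathbb{P}^{\theta^\star}$. $K_i(\theta_p,\theta_q)=D(l_i(\cdot|\theta_p)\|l_i(\cdot|\theta_q))$;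 $\mathcal{S}(\theta_p,\theta_q)=\{i:K_i(\theta_p,\theta_q)>0\}$. Rule with parameter $a\in\mathbb{N}_+$: $\mathbb{I}=\{t_k\}_{k\in\mathbb{N}_+}$, $t_1=1$, $t_{k+1}-t_k=a^k$. For all $t\in\mathbb{N}$: $\pi_{i,t+1}(\theta)=\dfrac{l_i(s_{i,t+1}|\theta)\pi_{i,t}(\theta)}{\sum_p l_i(s_{i,t+1}|\theta_p)\pi_{i,t}(\theta_p)}$; if $t+1\in\mathbb{I}$, $\mu_{i,t+1}(\theta)=\dfrac{\min\{\{\mu_{j,t}(\theta)\}_{j\in\mathcal{N}_i},\pi_{i,t+1}(\theta)\}}{\sum_p\min\{\{\mu_{j,t}(\theta_p)\}_{j\in\mathcal{N}_i},\pi_{i,t+1}(\theta_p)\}}$; otherwise $\mu_{i,t+1}(\theta)=\mu_{i,t}(\theta)$. *)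

theory Defs
  imports "HOL-Probability.Probability"
begin

text \<open>Agents: a finite type 'v.  Hypotheses: a finite type 'h.
  Signals of every agent live in a common type 's; agent i's signal space is S i.
  A signal profile is a function 'v \<Rightarrow> 's.  L \<theta> is the joint likelihood
  l(.|\<theta>) as a pmf on profiles.\<close>

definition marg :: "('h \<Rightarrow> ('v \<Rightarrow> 's) pmf) \<Rightarrow> 'v \<Rightarrow> 's \<Rightarrow> 'h \<Rightarrow> real" where
  "marg L i w \<theta> = pmf (map_pmf (\<lambda>f. f i) (L \<theta>)) w"

definition KL :: "('h \<Rightarrow> ('v \<Rightarrow> 's) pmf) \<Rightarrow> ('v \<Rightarrow> 's set) \<Rightarrow> 'v \<Rightarrow> 'h \<Rightarrow> 'h \<Rightarrow> real" where
  "KL L S i p q = (\<Sum>w\<in>S i. marg L i w p * ln (marg L i w p / marg L i w q))"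

definition informative :: "('h \<Rightarrow> ('v \<Rightarrow> 's) pmf) \<Rightarrow> ('v \<Rightarrow> 's set) \<Rightarrow> 'h \<Rightarrow> 'h \<Rightarrow> 'v set" where
  "informative L S p q = {i. KL L S i p q > 0}"

definition neighbors :: "('v \<times> 'v) set \<Rightarrow> 'v \<Rightarrow> 'v set" where
  "neighbors E i = {j. (j, i) \<in> E}"

definition strongly_connected :: "('v \<times> 'v) set \<Rightarrow> bool" where
  "strongly_connected E \<longleftrightarrow> (\<forall>u w. (u, w) \<in> E\<^sup>*)"

definition dist_g :: "('v \<times> 'v) set \<Rightarrow> 'v \<Rightarrow> 'v \<Rightarrow> nat" where
  "dist_g E v i = (LEAST k. (v, i) \<in> E ^^ k)"

text \<open>Trigger times: trig a k = t_{k+1}; t_1 = 1, t_{k+1} - t_k = a^k.\<close>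
fun trig :: "nat \<Rightarrow> nat \<Rightarrow> nat" where
  "trig a 0 = 1"
| "trig a (Suc k) = trig a k + a ^ Suc k"

definition triggers :: "nat \<Rightarrow> nat set" where
  "triggers a = range (trig a)"

text \<open>Local Bayesian belief \<pi>_{i,t}; \<omega> (t+1) is the signal profile s_{t+1}.\<close>
fun pib :: "('h \<Rightarrow> ('v \<Rightarrow> 's) pmf) \<Rightarrow> ('v \<Rightarrow> 'h \<Rightarrow> real) \<Rightarrow> (nat \<Rightarrow> 'v \<Rightarrow> 's)
            \<Rightarrow> nat \<Rightarrow> 'v \<Rightarrow> 'h::finite \<Rightarrow> real" where
  "pib L pi0 \<omega> 0 i \<theta> = pi0 i \<theta>"
| "pib L pi0 \<omega> (Suc t) i \<theta> =
     marg L i (\<omega> (Suc t) i) \<theta> * pib L pi0 \<omega> t i \<theta> /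
     (\<Sum>p\<in>UNIV. marg L i (\<omega> (Suc t) i) p * pib L pi0 \<omega> t i p)"

fun mub :: "('h \<Rightarrow> ('v \<Rightarrow> 's) pmf) \<Rightarrow> ('v \<times> 'v) set \<Rightarrow> nat \<Rightarrow> ('v \<Rightarrow> 'h \<Rightarrow> real)
            \<Rightarrow> ('v \<Rightarrow> 'h \<Rightarrow> real) \<Rightarrow> (nat \<Rightarrow> 'v \<Rightarrow> 's) \<Rightarrow> nat \<Rightarrow> 'v \<Rightarrow> 'h::finite \<Rightarrow> real" where
  "mub L E a pi0 mu0 \<omega> 0 i \<theta> = mu0 i \<theta>"
| "mub L E a pi0 mu0 \<omega> (Suc t) i \<theta> =
     (if Suc t \<in> triggers a then
        Min (insert (pib L pi0 \<omega> (Suc t) i \<theta>) ((\<lambda>j. mub L E a pi0 mu0 \<omega> t j \<theta>) ` neighbors E i)) /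
        (\<Sum>p\<in>UNIV. Min (insert (pib L pi0 \<omega> (Suc t) i p) ((\<lambda>j. mub L E a pi0 mu0 \<omega> t j p) ` neighbors E i)))
      else mub L E a pi0 mu0 \<omega> t i \<theta>)"

text \<open>Law of the i.i.d. sequence of profiles (index 0 is unused).\<close>
definition iid_law :: "('v \<Rightarrow> 's) pmf \<Rightarrow> (nat \<Rightarrow> 'v \<Rightarrow> 's) measure" where
  "iid_law p = PiM UNIV (\<lambda>_. measure_pmf p)"

end

theory Submission
  imports Defs "HOL-Real_Asymp.Real_Asymp"
begin

text \<open>Under the true state the log-likelihood ratios of agent \<open>v\<close> grow at rate
  \<open>K = K\<^sub>v(\<theta>\<^sup>\<star>, \<theta>)\<close> (a one-sided strong law from Hoeffding's inequality and
  Borel--Cantelli), so its local belief in \<open>\<theta>\<close> decays like \<open>exp (-K t)\<close>, while all local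
  beliefs in \<open>\<theta>\<^sup>\<star>\<close> decay only subexponentially.  At a trigger time an agent's belief is at
  most a neighbour's belief divided by the normaliser of the min-rule, and the normaliser is
  bounded below by the running minimum of the beliefs in \<open>\<theta>\<^sup>\<star>\<close>.  Hence a bound
  \<open>exp (-y t\<^sub>k)\<close> for agent \<open>j\<close> on the window starting at \<open>t\<^sub>k\<^sub>+\<^sub>d\<close> passes to every
  out-neighbour of \<open>j\<close> on the window starting at \<open>t\<^sub>k\<^sub>+\<^sub>d\<^sub>+\<^sub>1\<close>.  Along a shortest path
  this reaches \<open>i\<close> with delay \<open>d(v, i)\<close>, and \<open>t\<^sub>k\<^sub>+\<^sub>d\<^sub>+\<^sub>1 \<le> a\<^sup>d\<^sup>+\<^sup>1 t\<^sub>k + O(1)\<close>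
  turns the exponent \<open>K t\<^sub>k\<close> into the rate \<open>K / a\<^sup>d\<^sup>+\<^sup>1\<close> per unit of time.\<close>

section \<open>A one-sided strong law for i.i.d. sequences with finite range\<close>

lemma indep_vars_iid_components:
  fixes P :: "'a pmf"
  shows "prob_space.indep_vars (PiM UNIV (\<lambda>_::nat. measure_pmf P)) (\<lambda>_. measure_pmf P) (\<lambda>i \<omega>. \<omega> i) UNIV"
proof -
  let ?M = "PiM UNIV (\<lambda>_::nat. measure_pmf P)"
  interpret prob_space ?M by (rule prob_space_PiM) (simp add: measure_pmf.prob_space_axioms)
  show ?thesis
  proof (subst indep_vars_iff_distr_eq_PiM')
    show "distr ?M (Pi\<^sub>M UNIV (\<lambda>i. measure_pmf P)) (\<lambda>x. \<lambda>i\<in>UNIV. x i) =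
      Pi\<^sub>M UNIV (\<lambda>i. distr ?M (measure_pmf P) (\<lambda>\<omega>. \<omega> i))"
      by (subst distr_PiM_component) (auto simp: measure_pmf.prob_space_axioms restrict_UNIV distr_id)
  qed auto
qed

lemma iid_mean_lower_tail_bound:
  fixes P :: "'a pmf" and g :: "'a \<Rightarrow> real"
  defines "M \<equiv> PiM UNIV (\<lambda>_::nat. measure_pmf P)"
  assumes fin: "finite (set_pmf P)" and eps: "\<epsilon> > 0"
  obtains c where "c > 0" and "\<And>n. n \<ge> 1 \<Longrightarrow>
    measure M {\<omega>\<in>space M. (\<Sum>s\<in>{1..n}. g (\<omega> s)) / real n \<le> measure_pmf.expectation P g - \<epsilon>}
      \<le> exp (-c) ^ n"
proof -
  interpret prob_space M unfolding M_def
    by (rule prob_space_PiM) (simp add: measure_pmf.prob_space_axioms)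
  define lo where "lo = Min (g ` set_pmf P) - 1"
  define hi where "hi = Max (g ` set_pmf P) + 1"
  have g_range: "lo < g x \<and> g x < hi" if "x \<in> set_pmf P" for x
  proof -
    have "Min (g ` set_pmf P) \<le> g x" "g x \<le> Max (g ` set_pmf P)" using fin that by auto
    then show ?thesis by (simp add: lo_def hi_def)
  qed
  have lohi: "lo < hi"
    using g_range set_pmf_not_empty[of P] by fastforce
  define X where "X = (\<lambda>s (\<omega>::nat \<Rightarrow> 'a). g (\<omega> s))"
  have component_law: "distr M (measure_pmf P) (\<lambda>\<omega>. \<omega> i) = measure_pmf P" for i
    unfolding M_def by (rule distr_PiM_component) (auto simp: measure_pmf.prob_space_axioms)
  have X_law: "distr M borel (X i) = distr (measure_pmf P) borel g" for i
  proof -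
    have "distr M borel (X i) = distr (distr M (measure_pmf P) (\<lambda>\<omega>. \<omega> i)) borel g"
      by (subst distr_distr) (auto simp: X_def comp_def M_def)
    then show ?thesis by (simp add: component_law)
  qed
  have X_mean: "expectation (X 0) = measure_pmf.expectation P g"
  proof -
    have "expectation (X 0) = integral\<^sup>L (distr M (measure_pmf P) (\<lambda>\<omega>. \<omega> 0)) g"
      by (subst integral_distr) (auto simp: X_def M_def)
    then show ?thesis by (simp add: component_law)
  qed
  have X_range: "AE \<omega> in M. X 0 \<omega> \<in> {lo..hi}"
  proof -
    have "AE x in measure_pmf P. g x \<in> {lo..hi}"
      using g_range by (auto simp: AE_measure_pmf_iff less_imp_le)
    then show ?thesis unfolding X_def M_def
      by (rule AE_PiM_component[where I=UNIV and M="\<lambda>_. measure_pmf P", rotated 2])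
         (simp_all add: measure_pmf.prob_space_axioms)
  qed
  have X_indep: "indep_vars (\<lambda>_. borel) X I" for I
  proof -
    have "indep_vars (\<lambda>_. borel) (\<lambda>i \<omega>. g (\<omega> i)) UNIV"
      by (rule indep_vars_compose2[OF indep_vars_iid_components[of P, folded M_def]]) auto
    then show ?thesis unfolding X_def by (rule indep_vars_subset) auto
  qed
  have X_measurable: "X i \<in> borel_measurable M" for i
    unfolding X_def M_def by (rule measurable_compose[OF measurable_component_singleton]) auto
  define c where "c = 2 * \<epsilon>\<^sup>2 / (hi - lo)\<^sup>2"
  show thesis
  proof (rule that)
    show "c > 0" using eps lohi by (simp add: c_def)
    fix n :: nat assume n: "n \<ge> 1"
    interpret Hoeffding_ineq_iid M "{1..n}" X "X 0" lo hi "expectation (X 0)"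
      by unfold_locales (use X_range in \<open>simp_all add: X_indep X_law X_measurable\<close>)
    have "prob {\<omega>\<in>space M. (\<Sum>s\<in>{1..n}. g (\<omega> s)) / real n \<le> measure_pmf.expectation P g - \<epsilon>}
        \<le> exp (-2 * real (card {1..n}) * \<epsilon>\<^sup>2 / (hi - lo)\<^sup>2)"
      using Hoeffding_ineq_le'[of \<epsilon>] eps lohi n by (simp add: X_def X_mean[unfolded X_def])
    also have "\<dots> = exp (real n * (-c))" by (simp add: c_def)
    also have "\<dots> = exp (-c) ^ n" by (rule exp_of_nat_mult)
    finally show "measure M {\<omega>\<in>space M. (\<Sum>s\<in>{1..n}. g (\<omega> s)) / real n
        \<le> measure_pmf.expectation P g - \<epsilon>} \<le> exp (-c) ^ n" .
  qed
qed

lemma AE_iid_sum_eventually_ge: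
  fixes P :: "'a pmf" and g :: "'a \<Rightarrow> real"
  assumes fin: "finite (set_pmf P)" and eps: "\<epsilon> > 0"
  shows "AE \<omega> in PiM UNIV (\<lambda>_::nat. measure_pmf P). \<forall>\<^sub>F n in sequentially.
           real n * (measure_pmf.expectation P g - \<epsilon>) \<le> (\<Sum>s\<in>{1..n}. g (\<omega> s))"
proof -
  let ?M = "PiM UNIV (\<lambda>_::nat. measure_pmf P)"
  interpret prob_space ?M by (rule prob_space_PiM) (simp add: measure_pmf.prob_space_axioms)
  define A where "A n = {\<omega>\<in>space ?M. (\<Sum>s\<in>{1..n}. g (\<omega> s)) / real n \<le> measure_pmf.expectation P g - \<epsilon>}"
    for n
  obtain c where c: "c > 0" and tail: "\<And>n. n \<ge> 1 \<Longrightarrow> prob (A n) \<le> exp (-c) ^ n"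
    using iid_mean_lower_tail_bound[OF fin eps, of g] unfolding A_def by blast
  have summable: "summable (\<lambda>n. prob (A n))"
  proof (rule summable_comparison_test')
    show "summable (\<lambda>n. exp (-c) ^ n)" using c by (intro summable_geometric) auto
  qed (use tail in simp)
  have [measurable]: "(\<lambda>\<omega>. g (\<omega> s)) \<in> borel_measurable ?M" for s
    by (rule measurable_compose[OF measurable_component_singleton]) auto
  have A_sets: "A n \<in> sets ?M" for n unfolding A_def by measurable
  have "AE \<omega> in ?M. \<forall>\<^sub>F n in sequentially. \<omega> \<in> space ?M - A n"
    using A_sets summable
    by (intro borel_cantelli_AE1) (auto simp: less_top[symmetric] emeasure_finite)
  then show ?thesis
  proof (rule eventually_mono)
    fix \<omega> assume "\<forall>\<^sub>F n in sequentially. \<omega> \<in> space ?M - A n"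
    with eventually_ge_at_top[of 1]
    show "\<forall>\<^sub>F n in sequentially. real n * (measure_pmf.expectation P g - \<epsilon>) \<le> (\<Sum>s\<in>{1..n}. g (\<omega> s))"
      by eventually_elim (auto simp: A_def field_simps)
  qed
qed

lemma AE_iid_sum_eventually_ge_all:
  fixes P :: "'a pmf" and g :: "'a \<Rightarrow> real"
  assumes fin: "finite (set_pmf P)"
  shows "AE \<omega> in PiM UNIV (\<lambda>_::nat. measure_pmf P). \<forall>\<epsilon>>0. \<forall>\<^sub>F n in sequentially.
           real n * (measure_pmf.expectation P g - \<epsilon>) \<le> (\<Sum>s\<in>{1..n}. g (\<omega> s))"
proof -
  have "AE \<omega> in PiM UNIV (\<lambda>_::nat. measure_pmf P). \<forall>m::nat. \<forall>\<^sub>F n in sequentially.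
          real n * (measure_pmf.expectation P g - 1 / Suc m) \<le> (\<Sum>s\<in>{1..n}. g (\<omega> s))"
    by (subst AE_all_countable, intro allI, rule AE_iid_sum_eventually_ge[OF fin]) simp
  then show ?thesis
  proof (rule eventually_mono, intro allI impI)
    fix \<omega> and \<epsilon> :: real
    assume H: "\<forall>m::nat. \<forall>\<^sub>F n in sequentially.
                 real n * (measure_pmf.expectation P g - 1 / Suc m) \<le> (\<Sum>s\<in>{1..n}. g (\<omega> s))"
      and \<epsilon>: "\<epsilon> > 0"
    obtain m :: nat where m: "1 / Suc m < \<epsilon>"
      using \<epsilon> by (metis nat_approx_posE)
    show "\<forall>\<^sub>F n in sequentially. real n * (measure_pmf.expectation P g - \<epsilon>) \<le> (\<Sum>s\<in>{1..n}. g (\<omega> s))"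
      using H[rule_format, of m]
    proof eventually_elim
      case (elim n)
      have "real n * (measure_pmf.expectation P g - \<epsilon>)
          \<le> real n * (measure_pmf.expectation P g - 1 / Suc m)"
        using m by (intro mult_left_mono) auto
      with elim show ?case by linarith
    qed
  qed
qed

lemma AE_iid_in_set:
  assumes "set_pmf P \<subseteq> A"
  shows "AE \<omega> in PiM UNIV (\<lambda>_::nat. measure_pmf P). \<forall>t. \<omega> t \<in> A"
proof (subst AE_all_countable, intro allI)
  fix t :: nat
  have "AE x in measure_pmf P. x \<in> A" using assms by (auto simp: AE_measure_pmf_iff)
  then show "AE \<omega> in PiM UNIV (\<lambda>_::nat. measure_pmf P). \<omega> t \<in> A"
    by (rule AE_PiM_component[where I=UNIV and M="\<lambda>_. measure_pmf P", rotated 2])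
       (simp_all add: measure_pmf.prob_space_axioms)
qed

section \<open>Trigger times\<close>

lemma trig_eq_geometric: "a \<ge> 1 \<Longrightarrow> (a - 1) * trig a k + 1 = a ^ Suc k"
proof (induction k)
  case (Suc k)
  have "(a - 1) * trig a (Suc k) + 1 = ((a - 1) * trig a k + 1) + (a - 1) * a ^ Suc k"
    by (simp add: algebra_simps)
  also have "\<dots> = a ^ Suc (Suc k)" using Suc by (cases a) (auto simp: algebra_simps)
  finally show ?case .
qed simp

lemma real_trig_eq: "a \<ge> 2 \<Longrightarrow> real (trig a k) = (real a ^ Suc k - 1) / (real a - 1)"
proof -
  assume a: "a \<ge> 2"
  have "real ((a - 1) * trig a k + 1) = real (a ^ Suc k)" using trig_eq_geometric[of a k] a by simp
  then have "(real a - 1) * real (trig a k) + 1 = real a ^ Suc k" using a by (simp add: of_nat_diff)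
  then show ?thesis using a by (simp add: field_simps)
qed

lemma trig_ge_1: "trig a k \<ge> 1"
  by (induction k) auto

lemma trig_ge_self: "a \<ge> 1 \<Longrightarrow> trig a k \<ge> k"
proof (induction k)
  case (Suc k)
  have "1 \<le> a ^ Suc k" using Suc.prems by (rule one_le_power)
  then show ?case unfolding trig.simps using Suc by linarith
qed simp

lemma strict_mono_trig: "a \<ge> 1 \<Longrightarrow> strict_mono (trig a)"
  by (rule strict_monoI_Suc) simp

lemma filterlim_trig: "a \<ge> 1 \<Longrightarrow> filterlim (trig a) sequentially sequentially"
  by (rule filterlim_subseq[OF strict_mono_trig])

lemma trig_add_le:
  assumes a: "a \<ge> 2"
  shows "real (trig a (k + m)) \<le> real a ^ m * real (trig a k) + real (trig a m)"
proof -
  have a1_pos: "real a - 1 > 0" using a by simp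
  have "real a ^ m \<le> real a ^ Suc m" using a by simp
  then have "real a ^ Suc (k + m) - 1 \<le> real a ^ m * (real a ^ Suc k - 1) + (real a ^ Suc m - 1)"
    by (simp add: algebra_simps power_add)
  then have "(real a ^ Suc (k + m) - 1) / (real a - 1)
      \<le> (real a ^ m * (real a ^ Suc k - 1) + (real a ^ Suc m - 1)) / (real a - 1)"
    using a1_pos by (intro divide_right_mono) auto
  then show ?thesis using a1_pos by (simp add: real_trig_eq[OF a] add_divide_distrib)
qed

lemma trig_window_after:
  assumes a: "a \<ge> 1" and t: "trig a m \<le> t"
  obtains k where "m \<le> k" "trig a k \<le> t" "t < trig a (Suc k)"
proof -
  have "t < trig a (Suc t)" using trig_ge_self[OF a, of "Suc t"] by (simp del: trig.simps)
  then have ex: "\<exists>k. t < trig a k" ..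
  define k' where "k' = (LEAST k. t < trig a k)"
  have k': "t < trig a k'" unfolding k'_def by (rule LeastI_ex[OF ex])
  have below: "\<not> t < trig a k" if "k < k'" for k
    using that not_less_Least unfolding k'_def by blast
  have "m < k'"
  proof (rule ccontr)
    assume "\<not> m < k'"
    then have "trig a k' \<le> trig a m" using strict_mono_less_eq[OF strict_mono_trig[OF a]] by simp
    with t k' show False by simp
  qed
  then obtain k where k: "k' = Suc k" "m \<le> k" by (cases k') auto
  with below[of k] k' show thesis by (intro that[of k]) auto
qed

lemma trig_in_triggers: "trig a k \<in> triggers a"
  by (simp add: triggers_def)

lemma not_in_triggers_between:
  assumes a: "a \<ge> 1" and "trig a k < s" "s < trig a (Suc k)"
  shows "s \<notin> triggers a"
proof
  assume "s \<in> triggers a"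
  then obtain m where m: "s = trig a m" by (auto simp: triggers_def)
  with assms have "k < m" "m < Suc k"
    using strict_mono_less[OF strict_mono_trig[OF a]] by metis+
  then show False by simp
qed

text \<open>A lower bound \<open>y t\<^sub>k\<close> on the windows \<open>[t\<^sub>k\<^sub>+\<^sub>d, t\<^sub>k\<^sub>+\<^sub>d\<^sub>+\<^sub>1)\<close>, for all \<open>y < K\<close>,
  gives the growth rate \<open>K / a\<^sup>d\<^sup>+\<^sup>1\<close> per unit of time, because \<open>t\<^sub>k\<^sub>+\<^sub>d\<^sub>+\<^sub>1 \<le> a\<^sup>d\<^sup>+\<^sup>1 t\<^sub>k + t\<^sub>d\<^sub>+\<^sub>1\<close>.\<close>

lemma liminf_ge_of_trig_windows:
  fixes g :: "nat \<Rightarrow> real"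
  assumes a: "a \<ge> 2" and K: "K > 0"
    and windows: "\<And>y. y < K \<Longrightarrow> \<forall>\<^sub>F k in sequentially. \<forall>t. trig a (k + d) \<le> t \<and>
        t < trig a (Suc (k + d)) \<longrightarrow> y * real (trig a k) \<le> g t"
  shows "liminf (\<lambda>t. ereal (g t / real t)) \<ge> ereal (K / real a ^ (d + 1))"
proof (subst le_Liminf_iff, intro allI impI)
  define A where "A = real a ^ (d + 1)"
  define c where "c = real (trig a (Suc d))"
  have A: "A > 0" unfolding A_def using a by simp
  fix z assume "z < ereal (K / real a ^ (d + 1))"
  then obtain r0 where "z < ereal r0" "ereal r0 < ereal (K / A)"
    unfolding A_def using ereal_dense2 by blast
  then have r0: "z < ereal r0" "r0 < K / A" by simp_all
  define r where "r = max r0 (K / A / 2)"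
  have KA: "K / A > 0" using K A by simp
  have "z < ereal r" using r0(1) by (rule order.strict_trans2) (simp add: r_def)
  moreover have "0 < r" using KA by (simp add: r_def)
  moreover have "r * A < K"
  proof -
    have "r < K / A" using r0(2) KA by (simp add: r_def)
    then show ?thesis using A by (simp add: pos_less_divide_eq)
  qed
  ultimately have r: "z < ereal r" "0 < r" "r * A < K" by blast+
  define y where "y = (K + r * A) / 2"
  have y: "y < K" "r * A < y" using r(3) by (simp_all add: y_def algebra_simps)
  obtain N where N: "\<And>k t. N \<le> k \<Longrightarrow> trig a (k + d) \<le> t \<Longrightarrow> t < trig a (Suc (k + d)) \<Longrightarrow>
      y * real (trig a k) \<le> g t"
    using windows[OF y(1)] unfolding eventually_sequentially by blast
  define N' where "N' = max N (nat \<lceil>r * c / (y - r * A)\<rceil>)"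
  show "\<forall>\<^sub>F t in sequentially. z < ereal (g t / real t)"
    using eventually_ge_at_top[of "trig a (N' + d)"]
  proof eventually_elim
    case (elim t)
    obtain k' where k': "N' + d \<le> k'" "trig a k' \<le> t" "t < trig a (Suc k')"
      using trig_window_after[OF _ elim] a by auto
    define k where "k = k' - d"
    have kd: "k' = k + d" and kN: "N' \<le> k" using k'(1) by (auto simp: k_def)
    have t_pos: "real t > 0" using k'(2) trig_ge_1[of a k'] by simp
    have "r * c \<le> (y - r * A) * real k"
      using kN y(2) by (simp add: N'_def divide_le_eq mult.commute)
    also have "\<dots> \<le> (y - r * A) * real (trig a k)"
      using y(2) trig_ge_self[of a k] a by (intro mult_left_mono) auto
    finally have rc: "r * c \<le> (y - r * A) * real (trig a k)" .
    have "real t < real (trig a (k + Suc d))" using k'(3) kd by (simp del: trig.simps)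
    also have "\<dots> \<le> A * real (trig a k) + c" unfolding A_def c_def using trig_add_le[OF a, of k "Suc d"] by simp
    finally have "r * real t < r * (A * real (trig a k) + c)" using r(2) by simp
    also have "\<dots> \<le> y * real (trig a k)" using rc by (simp add: algebra_simps)
    also have "\<dots> \<le> g t" using kN k'(2,3) kd by (intro N) (auto simp: N'_def)
    finally have "r < g t / real t" using t_pos by (simp add: field_simps)
    with r(1) show ?case by (simp add: order.strict_trans)
  qed
qed

lemma eventually_exp_neg_le:
  assumes "\<delta> > 0" "c > 0"
  shows "\<forall>\<^sub>F t in sequentially. exp (-\<delta> * real t) \<le> c"
proof -
  have "(\<lambda>t::nat. exp (-\<delta> * real t)) \<longlonglongrightarrow> 0" using assms(1) by real_asymp
  from order_tendstoD(2)[OF this assms(2)] show ?thesis by eventually_elim simp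
qed

lemma sum_marg_eq_1:
  assumes fin_S: "\<And>j. finite (S j)" and supp: "\<And>h. set_pmf (L h) \<subseteq> Pi UNIV S"
  shows "(\<Sum>w\<in>S j. marg L j w h) = 1"
  unfolding marg_def
proof (rule sum_pmf_eq_1)
  show "finite (S j)" by (rule fin_S)
  show "set_pmf (map_pmf (\<lambda>f. f j) (L h)) \<subseteq> S j" using supp[of h] by auto
qed

lemma KL_nonneg:
  assumes fin_S: "\<And>j. finite (S j)" and supp: "\<And>h. set_pmf (L h) \<subseteq> Pi UNIV S"
    and pos_lik: "\<And>j w h. w \<in> S j \<Longrightarrow> marg L j w h > 0"
  shows "KL L S j p q \<ge> 0"
proof -
  have "(\<Sum>w\<in>S j. marg L j w p - marg L j w q) \<le> KL L S j p q"
    unfolding KL_def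
  proof (rule sum_mono)
    fix w assume w: "w \<in> S j"
    define P Q where "P = marg L j w p" and "Q = marg L j w q"
    have P: "P > 0" and Q: "Q > 0" using pos_lik[OF w] by (auto simp: P_def Q_def)
    have "ln (Q / P) \<le> Q / P - 1" using P Q by (intro ln_le_minus_one) auto
    then have "1 - Q / P \<le> ln (P / Q)" using P Q by (simp add: ln_div)
    from mult_left_mono[OF this, of P] P
    show "marg L j w p - marg L j w q \<le> marg L j w p * ln (marg L j w p / marg L j w q)"
      by (simp add: P_def Q_def right_diff_distrib)
  qed
  also have "(\<Sum>w\<in>S j. marg L j w p - marg L j w q) = 0"
    by (simp add: sum_subtractf sum_marg_eq_1[OF fin_S supp])
  finally show ?thesis by simp
qed

lemma expectation_log_lik_ratio:
  assumes fin_S: "\<And>j. finite (S j)" and supp: "\<And>h. set_pmf (L h) \<subseteq> Pi UNIV S"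
  shows "measure_pmf.expectation (L p) (\<lambda>f. ln (marg L j (f j) p / marg L j (f j) q)) = KL L S j p q"
proof -
  have "measure_pmf.expectation (L p) (\<lambda>f. ln (marg L j (f j) p / marg L j (f j) q))
      = measure_pmf.expectation (map_pmf (\<lambda>f. f j) (L p)) (\<lambda>w. ln (marg L j w p / marg L j w q))"
    by simp
  also have "\<dots> = (\<Sum>w\<in>S j. pmf (map_pmf (\<lambda>f. f j) (L p)) w *\<^sub>R ln (marg L j w p / marg L j w q))"
    by (rule integral_measure_pmf[OF fin_S]) (use supp[of p] in auto)
  also have "\<dots> = KL L S j p q" by (simp add: KL_def marg_def)
  finally show ?thesis .
qed

lemma finite_set_pmf_profiles:
  assumes fin_S: "\<And>j. finite (S j)"
    and supp: "set_pmf P \<subseteq> Pi UNIV (S :: 'v::finite \<Rightarrow> 's set)"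
  shows "finite (set_pmf P)"
proof (rule finite_subset[OF supp])
  have "finite (Pi\<^sub>E UNIV S)" using fin_S by (intro finite_PiE) auto
  then show "finite (Pi UNIV S)" by (simp add: PiE_UNIV_domain)
qed

lemma Min_insert_pos:
  assumes "x > 0" "\<forall>y\<in>A. y > (0::real)" "finite A"
  shows "Min (insert x A) > 0"
  using assms by (subst Min_gr_iff) auto

section \<open>A single run of the learning dynamics\<close>

definition log_lik_ratio_sum ::
    "('h \<Rightarrow> ('v \<Rightarrow> 's) pmf) \<Rightarrow> (nat \<Rightarrow> 'v \<Rightarrow> 's) \<Rightarrow> 'h \<Rightarrow> 'v \<Rightarrow> 'h \<Rightarrow> nat \<Rightarrow> real" where
  "log_lik_ratio_sum L \<omega> p j q t = (\<Sum>s\<in>{1..t}. ln (marg L j (\<omega> s j) p / marg L j (\<omega> s j) q))"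

lemma log_lik_ratio_sum_Suc:
  "log_lik_ratio_sum L \<omega> p j q (Suc t) =
     log_lik_ratio_sum L \<omega> p j q t + ln (marg L j (\<omega> (Suc t) j) p / marg L j (\<omega> (Suc t) j) q)"
  unfolding log_lik_ratio_sum_def by (simp add: atLeastAtMostSuc_conv add.commute)

declare pib.simps(2) [simp del]

text \<open>A fixed signal sequence \<open>\<omega>\<close>, with \<open>\<theta>\<^sub>s\<close> the true state; the hypotheses on \<open>\<omega>\<close> are
  exactly those that hold almost surely.\<close>

locale learning_run =
  fixes L :: "'h::finite \<Rightarrow> ('v::finite \<Rightarrow> 's) pmf" and S :: "'v \<Rightarrow> 's set"
    and E :: "('v \<times> 'v) set" and a :: nat and pi0 mu0 :: "'v \<Rightarrow> 'h \<Rightarrow> real"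
    and \<omega> :: "nat \<Rightarrow> 'v \<Rightarrow> 's" and \<theta>s :: 'h
  assumes signal_in_support: "\<And>t j. \<omega> t j \<in> S j"
    and pos_lik: "\<And>j w h. w \<in> S j \<Longrightarrow> marg L j w h > 0"
    and pi0_pos: "\<And>j h. pi0 j h > 0" and pi0_sum: "\<And>j. (\<Sum>h\<in>UNIV. pi0 j h) = 1"
    and mu0_pos: "\<And>j h. mu0 j h > 0"
    and a2: "a \<ge> 2"
    and KL_true_nonneg: "\<And>j q. KL L S j \<theta>s q \<ge> 0"
    and log_lik_ratio_growth: "\<And>j q \<epsilon>. \<epsilon> > 0 \<Longrightarrow>
      \<forall>\<^sub>F t in sequentially. real t * (KL L S j \<theta>s q - \<epsilon>) \<le> log_lik_ratio_sum L \<omega> \<theta>s j q t"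
begin

abbreviation \<pi> where "\<pi> \<equiv> pib L pi0 \<omega>"
abbreviation \<mu> where "\<mu> \<equiv> mub L E a pi0 mu0 \<omega>"
abbreviation G where "G \<equiv> log_lik_ratio_sum L \<omega> \<theta>s"

lemma a_ge_1: "a \<ge> 1"
  using a2 by simp

lemma lik_pos: "marg L j (\<omega> t j) h > 0"
  using pos_lik signal_in_support by blast

lemma pib_pos_sum: "(\<forall>p. \<pi> t j p > 0) \<and> (\<Sum>p\<in>UNIV. \<pi> t j p) = 1"
proof (induction t)
  case 0 then show ?case using pi0_pos pi0_sum by simp
next
  case (Suc t)
  define D where "D = (\<Sum>p\<in>UNIV. marg L j (\<omega> (Suc t) j) p * \<pi> t j p)"
  have D: "D > 0" unfolding D_def using Suc lik_pos by (intro sum_pos) auto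
  have eq: "\<pi> (Suc t) j p = marg L j (\<omega> (Suc t) j) p * \<pi> t j p / D" for p
    by (simp add: D_def pib.simps)
  have "\<forall>p. \<pi> (Suc t) j p > 0" unfolding eq using Suc lik_pos D by auto
  moreover have "(\<Sum>p\<in>UNIV. \<pi> (Suc t) j p) = 1"
    unfolding eq using D by (simp add: sum_divide_distrib[symmetric] D_def[symmetric])
  ultimately show ?case by blast
qed

lemma pib_pos: "\<pi> t j p > 0"
  using pib_pos_sum by blast

lemma pib_sum: "(\<Sum>p\<in>UNIV. \<pi> t j p) = 1"
  using pib_pos_sum by blast

lemma pib_le_1: "\<pi> t j p \<le> 1"
proof -
  have "\<pi> t j p \<le> (\<Sum>p\<in>UNIV. \<pi> t j p)" by (rule member_le_sum) (auto intro: less_imp_le pib_pos)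
  then show ?thesis by (simp add: pib_sum)
qed

lemma pib_eq_ratio: "\<pi> t j q = \<pi> t j \<theta>s * (pi0 j q / pi0 j \<theta>s) * exp (- G j q t)"
proof (induction t)
  case 0 then show ?case using pi0_pos[of j \<theta>s] by (simp add: log_lik_ratio_sum_def)
next
  case (Suc t)
  define D where "D = (\<Sum>p\<in>UNIV. marg L j (\<omega> (Suc t) j) p * \<pi> t j p)"
  define lq ls where "lq = marg L j (\<omega> (Suc t) j) q" and "ls = marg L j (\<omega> (Suc t) j) \<theta>s"
  have lq: "lq > 0" and ls: "ls > 0" unfolding lq_def ls_def by (rule lik_pos)+
  have eq: "\<pi> (Suc t) j p = marg L j (\<omega> (Suc t) j) p * \<pi> t j p / D" for p
    by (simp add: D_def pib.simps)
  have "exp (- G j q (Suc t)) = exp (- G j q t) / exp (ln (ls / lq))"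
    unfolding log_lik_ratio_sum_Suc ls_def lq_def by (simp add: exp_diff[symmetric])
  also have "\<dots> = exp (- G j q t) * lq / ls" using lq ls by simp
  finally show ?case
    unfolding eq using Suc.IH lq ls by (simp add: lq_def[symmetric] ls_def[symmetric] field_simps)
qed

lemma pib_true_lower_bound:
  assumes \<epsilon>: "\<epsilon> > 0"
  shows "\<forall>\<^sub>F t in sequentially. exp (-\<epsilon> * real t) \<le> \<pi> t j \<theta>s"
proof -
  define C where "C = (\<Sum>q\<in>UNIV. pi0 j q / pi0 j \<theta>s)"
  have C: "C > 0" unfolding C_def using pi0_pos by (intro sum_pos) auto
  have "\<forall>\<^sub>F t in sequentially. \<forall>q. real t * (KL L S j \<theta>s q - \<epsilon>/2) \<le> G j q t"
    using \<epsilon> by (intro eventually_all_finite log_lik_ratio_growth) simp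
  moreover have "\<forall>\<^sub>F t in sequentially. exp (-(\<epsilon>/2) * real t) \<le> 1 / C"
    using \<epsilon> C by (intro eventually_exp_neg_le) auto
  ultimately show ?thesis
  proof eventually_elim
    case (elim t)
    have G: "- G j q t \<le> \<epsilon>/2 * real t" for q
    proof -
      have "real t * (KL L S j \<theta>s q - \<epsilon>/2) = real t * KL L S j \<theta>s q - \<epsilon>/2 * real t"
        by (simp add: algebra_simps)
      moreover have "0 \<le> real t * KL L S j \<theta>s q" using KL_true_nonneg[of j q] by simp
      ultimately show ?thesis using elim(1)[rule_format, of q] by linarith
    qed
    have "1 = (\<Sum>q\<in>UNIV. \<pi> t j q)" by (simp add: pib_sum)
    also have "\<dots> = (\<Sum>q\<in>UNIV. \<pi> t j \<theta>s * ((pi0 j q / pi0 j \<theta>s) * exp (- G j q t)))"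
      by (subst pib_eq_ratio) (simp add: mult.assoc)
    also have "\<dots> \<le> (\<Sum>q\<in>UNIV. \<pi> t j \<theta>s * ((pi0 j q / pi0 j \<theta>s) * exp (\<epsilon>/2 * real t)))"
      using pib_pos pi0_pos G by (intro sum_mono mult_left_mono) (auto intro: less_imp_le)
    also have "\<dots> = \<pi> t j \<theta>s * C * exp (\<epsilon>/2 * real t)"
      by (simp add: C_def sum_distrib_left sum_distrib_right mult.assoc)
    finally have lower: "1 \<le> \<pi> t j \<theta>s * C * exp (\<epsilon>/2 * real t)" .
    have "exp (-\<epsilon> * real t) = exp (-(\<epsilon>/2) * real t) * exp (-(\<epsilon>/2) * real t)"
      by (simp add: exp_add[symmetric])
    also have "\<dots> \<le> (1 / C) * exp (-(\<epsilon>/2) * real t)"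
      using elim(2) by (intro mult_right_mono) auto
    also have "\<dots> \<le> (1 / C) * ((\<pi> t j \<theta>s * C * exp (\<epsilon>/2 * real t)) * exp (-(\<epsilon>/2) * real t))"
      using lower C by (intro mult_left_mono) auto
    also have "\<dots> = \<pi> t j \<theta>s"
      using C by (simp add: exp_add[symmetric] field_simps)
    finally show ?case .
  qed
qed

lemma pib_upper_bound:
  assumes \<epsilon>: "\<epsilon> > 0"
  shows "\<forall>\<^sub>F t in sequentially.
           \<pi> t j q \<le> (pi0 j q / pi0 j \<theta>s) * exp (- (KL L S j \<theta>s q - \<epsilon>) * real t)"
  using log_lik_ratio_growth[OF \<epsilon>, of j q]
proof eventually_elim
  case (elim t)
  have c: "pi0 j q / pi0 j \<theta>s > 0" using pi0_pos by simp
  have "\<pi> t j q = \<pi> t j \<theta>s * ((pi0 j q / pi0 j \<theta>s) * exp (- G j q t))"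
    by (subst pib_eq_ratio) (simp add: mult.assoc)
  also have "\<dots> \<le> 1 * ((pi0 j q / pi0 j \<theta>s) * exp (- G j q t))"
    using c by (intro mult_right_mono pib_le_1 mult_nonneg_nonneg) auto
  also have "\<dots> \<le> (pi0 j q / pi0 j \<theta>s) * exp (- (KL L S j \<theta>s q - \<epsilon>) * real t)"
  proof -
    have "exp (- G j q t) \<le> exp (- (KL L S j \<theta>s q - \<epsilon>) * real t)"
      using elim by (simp add: algebra_simps)
    from mult_left_mono[OF this, of "pi0 j q / pi0 j \<theta>s"] c show ?thesis by simp
  qed
  finally show ?case .
qed

subsection \<open>The min-rule at trigger times\<close>

lemma mub_pos: "\<mu> t j p > 0"
proof (induction t arbitrary: j p)
  case 0 then show ?case using mu0_pos by simp
next
  case (Suc t)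
  have num: "Min (insert (\<pi> (Suc t) j' p') ((\<lambda>k. \<mu> t k p') ` neighbors E j')) > 0" for j' p'
    using Suc.IH pib_pos by (intro Min_insert_pos) auto
  then have "(\<Sum>p'\<in>UNIV. Min (insert (\<pi> (Suc t) j p') ((\<lambda>k. \<mu> t k p') ` neighbors E j))) > 0"
    by (intro sum_pos) auto
  with num Suc.IH show ?case by simp
qed

definition normaliser :: "nat \<Rightarrow> 'v \<Rightarrow> real" where
  "normaliser t j = (\<Sum>p\<in>UNIV. Min (insert (\<pi> t j p) ((\<lambda>k. \<mu> (t - 1) k p) ` neighbors E j)))"

lemma normaliser_pos: "normaliser t j > 0"
  unfolding normaliser_def using mub_pos pib_pos by (intro sum_pos Min_insert_pos) auto

lemma normaliser_le_1: "normaliser t j \<le> 1"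
proof -
  have "normaliser t j \<le> (\<Sum>p\<in>UNIV. \<pi> t j p)"
    unfolding normaliser_def by (intro sum_mono Min_le) auto
  then show ?thesis by (simp add: pib_sum)
qed

lemma normaliser_ge_Min:
  "Min (insert (\<pi> t j p) ((\<lambda>k. \<mu> (t - 1) k p) ` neighbors E j)) \<le> normaliser t j"
  unfolding normaliser_def using mub_pos pib_pos
  by (intro member_le_sum less_imp_le Min_insert_pos) auto

lemma mub_at_trigger:
  assumes "t \<in> triggers a" "t > 0"
  shows "\<mu> t j p = Min (insert (\<pi> t j p) ((\<lambda>k. \<mu> (t - 1) k p) ` neighbors E j)) / normaliser t j"
proof -
  obtain s where "t = Suc s" using assms(2) by (cases t) auto
  with assms(1) show ?thesis by (simp add: normaliser_def)
qed

lemma mub_const_on_window: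
  assumes "trig a k \<le> t" "t < trig a (Suc k)"
  shows "\<mu> t j p = \<mu> (trig a k) j p"
  using assms
proof (induction t)
  case (Suc t)
  show ?case
  proof (cases "trig a k = Suc t")
    case False
    with Suc.prems have "Suc t \<notin> triggers a"
      by (intro not_in_triggers_between[OF a_ge_1, of k]) auto
    with False Suc show ?thesis by simp
  qed simp
qed simp

definition true_belief_floor :: "nat \<Rightarrow> real" where
  "true_belief_floor t = Min (range (\<lambda>j. mu0 j \<theta>s) \<union> (\<lambda>(s, j). \<pi> s j \<theta>s) ` ({1..t} \<times> UNIV))"

lemma true_belief_floor_pos: "true_belief_floor t > 0"
  unfolding true_belief_floor_def using mu0_pos pib_pos by (auto simp: Min_gr_iff)

lemma true_belief_floor_le_mu0: "true_belief_floor t \<le> mu0 j \<theta>s"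
  unfolding true_belief_floor_def by (intro Min_le) auto

lemma true_belief_floor_le_pib: "1 \<le> s \<Longrightarrow> s \<le> t \<Longrightarrow> true_belief_floor t \<le> \<pi> s j \<theta>s"
  unfolding true_belief_floor_def by (intro Min_le) force+

lemma true_belief_floor_antimono: "s \<le> t \<Longrightarrow> true_belief_floor t \<le> true_belief_floor s"
  unfolding true_belief_floor_def by (intro Min_antimono) auto

lemma true_belief_floor_lower_bound:
  assumes \<epsilon>: "\<epsilon> > 0"
  shows "\<forall>\<^sub>F t in sequentially. exp (-\<epsilon> * real t) \<le> true_belief_floor t"
proof -
  have "\<forall>\<^sub>F t in sequentially. \<forall>j. exp (-\<epsilon> * real t) \<le> \<pi> t j \<theta>s"
    by (intro eventually_all_finite pib_true_lower_bound \<epsilon>)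
  then obtain N where N: "\<And>t j. N \<le> t \<Longrightarrow> exp (-\<epsilon> * real t) \<le> \<pi> t j \<theta>s"
    by (auto simp: eventually_sequentially)
  have "\<forall>\<^sub>F t in sequentially. exp (-\<epsilon> * real t) \<le> true_belief_floor N"
    using \<epsilon> true_belief_floor_pos by (rule eventually_exp_neg_le)
  with eventually_ge_at_top[of N] show ?thesis
  proof eventually_elim
    case (elim t)
    have "exp (-\<epsilon> * real t) \<le> x"
      if "x \<in> range (\<lambda>j. mu0 j \<theta>s) \<union> (\<lambda>(s, j). \<pi> s j \<theta>s) ` ({1..t} \<times> UNIV)" for x
    proof -
      have "(\<exists>j. x = mu0 j \<theta>s) \<or> (\<exists>s j. x = \<pi> s j \<theta>s \<and> 1 \<le> s \<and> s \<le> t)"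
        using that by auto
      then show ?thesis
      proof (elim disjE exE conjE)
        fix j assume "x = mu0 j \<theta>s"
        then show ?thesis using elim(2) true_belief_floor_le_mu0[of N j] by simp
      next
        fix s j assume x: "x = \<pi> s j \<theta>s" and s: "1 \<le> s" "s \<le> t"
        show ?thesis
        proof (cases "s \<le> N")
          case True
          then show ?thesis using x s elim(2) true_belief_floor_le_pib[of s N j] by simp
        next
          case False
          then have "exp (-\<epsilon> * real t) \<le> exp (-\<epsilon> * real s)" using \<epsilon> s by simp
          also have "\<dots> \<le> x" using False N[of s j] x by simp
          finally show ?thesis .
        qed
      qed
    qed
    then show ?case unfolding true_belief_floor_def by (intro Min.boundedI) auto
  qed
qed

lemma mub_true_ge_floor: "true_belief_floor t \<le> \<mu> t j \<theta>s"
proof (induction t arbitrary: j)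
  case 0 then show ?case using true_belief_floor_le_mu0 by simp
next
  case (Suc t)
  have antimono: "true_belief_floor (Suc t) \<le> true_belief_floor t"
    by (rule true_belief_floor_antimono) simp
  show ?case
  proof (cases "Suc t \<in> triggers a")
    case True
    define m where "m = Min (insert (\<pi> (Suc t) j \<theta>s) ((\<lambda>k. \<mu> t k \<theta>s) ` neighbors E j))"
    have "true_belief_floor (Suc t) \<le> m" unfolding m_def
      using Suc.IH antimono true_belief_floor_le_pib[of "Suc t" "Suc t" j]
      by (subst Min_ge_iff) (auto intro: order.trans)
    also have "m \<le> m / normaliser (Suc t) j"
    proof -
      have "m > 0" unfolding m_def using mub_pos pib_pos by (intro Min_insert_pos) auto
      then show ?thesis using normaliser_pos[of "Suc t" j] normaliser_le_1[of "Suc t" j]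
        by (simp add: le_divide_eq)
    qed
    also have "\<dots> = \<mu> (Suc t) j \<theta>s" using mub_at_trigger[OF True] by (simp add: m_def)
    finally show ?thesis .
  next
    case False
    then show ?thesis using Suc.IH[of j] antimono by simp
  qed
qed

lemma normaliser_ge_floor: "t > 0 \<Longrightarrow> true_belief_floor t \<le> normaliser t j"
proof -
  assume t: "t > 0"
  have antimono: "true_belief_floor t \<le> true_belief_floor (t - 1)"
    by (rule true_belief_floor_antimono) simp
  have "true_belief_floor t \<le> Min (insert (\<pi> t j \<theta>s) ((\<lambda>k. \<mu> (t - 1) k \<theta>s) ` neighbors E j))"
    using mub_true_ge_floor antimono true_belief_floor_le_pib[of t t j] t
    by (subst Min_ge_iff) (auto intro: order.trans)
  also have "\<dots> \<le> normaliser t j" by (rule normaliser_ge_Min)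
  finally show ?thesis .
qed

text \<open>The normaliser of the min-rule is at least the floor, which makes the bound
  independent of the beliefs in all other hypotheses.\<close>

lemma mub_at_trigger_le:
  assumes "t \<in> triggers a" "t > 0" "x \<in> insert (\<pi> t j p) ((\<lambda>k. \<mu> (t - 1) k p) ` neighbors E j)"
  shows "\<mu> t j p \<le> x / true_belief_floor t"
proof -
  have x: "x > 0" using assms(3) pib_pos mub_pos by auto
  have "\<mu> t j p \<le> x / normaliser t j"
    unfolding mub_at_trigger[OF assms(1,2)] using normaliser_pos assms(3)
    by (intro divide_right_mono Min_le) (auto intro: less_imp_le)
  also have "\<dots> \<le> x / true_belief_floor t"
    using x true_belief_floor_pos[of t] normaliser_pos[of t j] normaliser_ge_floor[OF assms(2), of j]
    by (intro divide_left_mono) auto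
  finally show ?thesis .
qed

subsection \<open>Propagation of decay along the graph\<close>

definition decays_with_delay :: "'h \<Rightarrow> real \<Rightarrow> 'v \<Rightarrow> nat \<Rightarrow> bool" where
  "decays_with_delay \<theta> K j d \<longleftrightarrow>
     (\<forall>y<K. \<forall>\<^sub>F k in sequentially. \<mu> (trig a (k + d)) j \<theta> \<le> exp (- y * real (trig a k)))"

lemma decays_with_delay_informative: "decays_with_delay \<theta> (KL L S v \<theta>s \<theta>) v 0"
  unfolding decays_with_delay_def
proof (intro allI impI)
  fix y assume y: "y < KL L S v \<theta>s \<theta>"
  define \<epsilon> where "\<epsilon> = (KL L S v \<theta>s \<theta> - y) / 3"
  define c where "c = pi0 v \<theta> / pi0 v \<theta>s"
  have \<epsilon>: "\<epsilon> > 0" and c: "c > 0" using y pi0_pos by (auto simp: \<epsilon>_def c_def)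
  then have c_inv: "1 / c > 0" by simp
  have "\<forall>\<^sub>F t in sequentially. t \<in> triggers a \<longrightarrow> t > 0 \<longrightarrow> \<mu> t v \<theta> \<le> exp (- y * real t)"
    using pib_upper_bound[OF \<epsilon>, of v \<theta>] true_belief_floor_lower_bound[OF \<epsilon>]
      eventually_exp_neg_le[OF \<epsilon> c_inv]
  proof eventually_elim
    case (elim t)
    show ?case
    proof (intro impI)
      assume t: "t \<in> triggers a" "t > 0"
      have "\<mu> t v \<theta> \<le> \<pi> t v \<theta> / true_belief_floor t"
        by (rule mub_at_trigger_le[OF t]) simp
      also have "\<dots> \<le> c * exp (- (KL L S v \<theta>s \<theta> - \<epsilon>) * real t) / exp (-\<epsilon> * real t)"
        using elim(1,2) true_belief_floor_pos[of t] pib_pos[of t v \<theta>] c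
        by (intro frac_le) (auto simp: c_def)
      also have "\<dots> = (c * exp (-\<epsilon> * real t)) * exp (- y * real t)"
      proof -
        have "- (KL L S v \<theta>s \<theta> - \<epsilon>) * real t - (-\<epsilon> * real t) = -\<epsilon> * real t + - y * real t"
          by (simp add: \<epsilon>_def field_simps)
        then have "exp (- (KL L S v \<theta>s \<theta> - \<epsilon>) * real t) / exp (-\<epsilon> * real t)
            = exp (-\<epsilon> * real t) * exp (- y * real t)"
          by (simp only: exp_diff[symmetric] exp_add[symmetric])
        then show ?thesis by (metis times_divide_eq_right mult.assoc)
      qed
      also have "\<dots> \<le> 1 * exp (- y * real t)"
        using elim(3) c by (intro mult_right_mono) (auto simp: field_simps)
      finally show "\<mu> t v \<theta> \<le> exp (- y * real t)" by simp
    qed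
  qed
  from eventually_compose_filterlim[OF this filterlim_trig[OF a_ge_1]]
  show "\<forall>\<^sub>F k in sequentially. \<mu> (trig a (k + 0)) v \<theta> \<le> exp (- y * real (trig a k))"
    by eventually_elim (simp add: trig_in_triggers less_le_trans[OF zero_less_one trig_ge_1])
qed

text \<open>The neighbour's window ends exactly one step before the trigger time \<open>t\<^sub>k\<^sub>+\<^sub>d\<^sub>+\<^sub>1\<close>,
  and the floor there costs only \<open>exp (\<epsilon> t\<^sub>k\<^sub>+\<^sub>d\<^sub>+\<^sub>1) \<le> exp (\<epsilon> C t\<^sub>k)\<close>.\<close>

lemma decays_with_delay_Suc:
  assumes decay: "decays_with_delay \<theta> K j' d" and nb: "j' \<in> neighbors E j"
  shows "decays_with_delay \<theta> K j (Suc d)"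
  unfolding decays_with_delay_def
proof (intro allI impI)
  fix y assume y: "y < K"
  define y' where "y' = (y + K) / 2"
  have y': "y < y'" "y' < K" using y by (auto simp: y'_def)
  define C where "C = real a ^ Suc d + real (trig a (Suc d))"
  have C: "C > 0" unfolding C_def using a2 by (simp add: add_pos_nonneg)
  define \<epsilon> where "\<epsilon> = (y' - y) / C"
  have \<epsilon>: "\<epsilon> > 0" using y' C by (simp add: \<epsilon>_def)
  have "\<forall>\<^sub>F k in sequentially. exp (-\<epsilon> * real (trig a k)) \<le> true_belief_floor (trig a k)"
    by (rule eventually_compose_filterlim[OF true_belief_floor_lower_bound[OF \<epsilon>] filterlim_trig[OF a_ge_1]])
  then have "\<forall>\<^sub>F k in sequentially.
      exp (-\<epsilon> * real (trig a (k + Suc d))) \<le> true_belief_floor (trig a (k + Suc d))"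
    by (subst eventually_sequentially_seg)
  moreover have "\<forall>\<^sub>F k in sequentially. \<mu> (trig a (k + d)) j' \<theta> \<le> exp (- y' * real (trig a k))"
    using decay y' unfolding decays_with_delay_def by blast
  ultimately show "\<forall>\<^sub>F k in sequentially. \<mu> (trig a (k + Suc d)) j \<theta> \<le> exp (- y * real (trig a k))"
  proof eventually_elim
    case (elim k)
    define T where "T = trig a (k + Suc d)"
    have T: "T \<in> triggers a" "T > 0"
      unfolding T_def using trig_in_triggers trig_ge_1[of a "k + Suc d"] by (blast, linarith)
    have "1 \<le> a ^ Suc (k + d)" using a_ge_1 by (rule one_le_power)
    moreover have "T = trig a (k + d) + a ^ Suc (k + d)" "trig a (Suc (k + d)) = T"
      by (simp_all add: T_def)
    ultimately have window: "trig a (k + d) \<le> T - 1" "T - 1 < trig a (Suc (k + d))"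
      using T(2) by arith+
    have T_le: "real T \<le> C * real (trig a k)"
    proof -
      have "real T \<le> real a ^ Suc d * real (trig a k) + real (trig a (Suc d))"
        unfolding T_def by (rule trig_add_le[OF a2])
      also have "\<dots> \<le> real a ^ Suc d * real (trig a k) + real (trig a (Suc d)) * real (trig a k)"
        using mult_left_mono[of 1 "real (trig a k)" "real (trig a (Suc d))"] trig_ge_1[of a k] by simp
      finally show ?thesis by (simp add: C_def algebra_simps)
    qed
    have "\<mu> T j \<theta> \<le> \<mu> (T - 1) j' \<theta> / true_belief_floor T"
      by (rule mub_at_trigger_le[OF T]) (use nb in simp)
    also have "\<dots> = \<mu> (trig a (k + d)) j' \<theta> / true_belief_floor T"
      using mub_const_on_window[OF window] by simp
    also have "\<dots> \<le> exp (- y' * real (trig a k)) / exp (-\<epsilon> * real T)"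
      using elim mub_pos[of "trig a (k + d)" j' \<theta>] by (intro frac_le) (auto simp: T_def)
    also have "\<dots> = exp (- y' * real (trig a k) + \<epsilon> * real T)"
      by (simp add: exp_diff[symmetric])
    also have "\<dots> \<le> exp (- y * real (trig a k))"
    proof -
      have "\<epsilon> * real T \<le> \<epsilon> * (C * real (trig a k))" using T_le \<epsilon> by (intro mult_left_mono) auto
      also have "\<dots> = (y' - y) * real (trig a k)" using C by (simp add: \<epsilon>_def)
      finally show ?thesis by (simp add: algebra_simps)
    qed
    finally show ?case by (simp add: T_def)
  qed
qed

lemma decays_with_delay_path:
  assumes source: "decays_with_delay \<theta> K v 0"
  shows "(v, j) \<in> E ^^ d \<Longrightarrow> decays_with_delay \<theta> K j d"
proof (induction d arbitrary: j)
  case 0 then show ?case using source by simp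
next
  case (Suc d)
  then obtain j' where "(v, j') \<in> E ^^ d" "(j', j) \<in> E" by auto
  with Suc.IH show ?case by (intro decays_with_delay_Suc) (auto simp: neighbors_def)
qed

lemma liminf_neg_ln_mub_ge:
  assumes K: "KL L S v \<theta>s \<theta> > 0" and path: "(v, i) \<in> E ^^ d"
  shows "liminf (\<lambda>t. ereal (- ln (\<mu> t i \<theta>) / real t)) \<ge> ereal (KL L S v \<theta>s \<theta> / real a ^ (d + 1))"
proof (rule liminf_ge_of_trig_windows[OF a2 K])
  fix y assume y: "y < KL L S v \<theta>s \<theta>"
  have "decays_with_delay \<theta> (KL L S v \<theta>s \<theta>) i d"
    by (rule decays_with_delay_path[OF decays_with_delay_informative path])
  with y have "\<forall>\<^sub>F k in sequentially. \<mu> (trig a (k + d)) i \<theta> \<le> exp (- y * real (trig a k))"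
    unfolding decays_with_delay_def by blast
  then show "\<forall>\<^sub>F k in sequentially. \<forall>t. trig a (k + d) \<le> t \<and> t < trig a (Suc (k + d)) \<longrightarrow>
      y * real (trig a k) \<le> - ln (\<mu> t i \<theta>)"
  proof (eventually_elim, intro allI impI)
    fix k t assume decay: "\<mu> (trig a (k + d)) i \<theta> \<le> exp (- y * real (trig a k))"
      and t: "trig a (k + d) \<le> t \<and> t < trig a (Suc (k + d))"
    have "\<mu> t i \<theta> = \<mu> (trig a (k + d)) i \<theta>"
      using t by (intro mub_const_on_window) auto
    with decay have "\<mu> t i \<theta> \<le> exp (- y * real (trig a k))" by simp
    then have "ln (\<mu> t i \<theta>) \<le> ln (exp (- y * real (trig a k)))"
      using mub_pos[of t i \<theta>] by (subst ln_le_cancel_iff) auto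
    then show "y * real (trig a k) \<le> - ln (\<mu> t i \<theta>)" by simp
  qed
qed

end

section \<open>The almost-sure statement\<close>

lemma AE_log_lik_ratio_growth:
  fixes L :: "'h::finite \<Rightarrow> ('v::finite \<Rightarrow> 's) pmf"
  assumes fin_S: "\<And>j. finite (S j)" and supp: "\<And>h. set_pmf (L h) \<subseteq> Pi UNIV S"
  shows "AE \<omega> in iid_law (L p). \<forall>j q. \<forall>\<epsilon>>0. \<forall>\<^sub>F t in sequentially.
           real t * (KL L S j p q - \<epsilon>) \<le> log_lik_ratio_sum L \<omega> p j q t"
  unfolding iid_law_def
proof (intro eventually_all_finite)
  fix j q
  have fin: "finite (set_pmf (L p))" by (rule finite_set_pmf_profiles[OF fin_S supp])
  have mean: "measure_pmf.expectation (L p) (\<lambda>f. ln (marg L j (f j) p / marg L j (f j) q))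
      = KL L S j p q"
    by (rule expectation_log_lik_ratio[OF fin_S supp])
  show "AE \<omega> in PiM UNIV (\<lambda>_. measure_pmf (L p)). \<forall>\<epsilon>>0. \<forall>\<^sub>F t in sequentially.
          real t * (KL L S j p q - \<epsilon>) \<le> log_lik_ratio_sum L \<omega> p j q t"
    using AE_iid_sum_eventually_ge_all[OF fin, of "\<lambda>f. ln (marg L j (f j) p / marg L j (f j) q)"]
    unfolding mean log_lik_ratio_sum_def .
qed

lemma relpow_dist_g:
  assumes "strongly_connected E"
  shows "(v, i) \<in> E ^^ dist_g E v i"
proof -
  have "\<exists>n. (v, i) \<in> E ^^ n" using assms unfolding strongly_connected_def by (simp add: rtrancl_power)
  then show ?thesis unfolding dist_g_def by (rule LeastI_ex)
qed

theorem lemma3: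
  fixes L :: "'h::finite \<Rightarrow> ('v::finite \<Rightarrow> 's) pmf"
    and S :: "'v \<Rightarrow> 's set"
    and E :: "('v \<times> 'v) set"
    and a :: nat
    and pi0 mu0 :: "'v \<Rightarrow> 'h \<Rightarrow> real"
    and \<theta>star \<theta> :: 'h
    and v i :: 'v
  assumes fin_S: "\<And>j. finite (S j)"
    and supp: "\<And>h. set_pmf (L h) \<subseteq> Pi UNIV S"
    and pos_lik: "\<And>j w h. w \<in> S j \<Longrightarrow> marg L j w h > 0"
    and a2: "a \<ge> 2"
    and ident: "\<And>p q. p \<noteq> q \<Longrightarrow> informative L S p q \<noteq> {}"
    and sc: "strongly_connected E"
    and pi0_pos: "\<And>j h. pi0 j h > 0" and pi0_sum: "\<And>j. (\<Sum>h\<in>UNIV. pi0 j h) = 1"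
    and mu0_pos: "\<And>j h. mu0 j h > 0" and mu0_sum: "\<And>j. (\<Sum>h\<in>UNIV. mu0 j h) = 1"
    and neq: "\<theta> \<noteq> \<theta>star"
    and v_inf: "v \<in> informative L S \<theta>star \<theta>"
  shows "AE \<omega> in iid_law (L \<theta>star).
           liminf (\<lambda>t. ereal (- ln (mub L E a pi0 mu0 \<omega> t i \<theta>) / real t))
             \<ge> ereal (KL L S v \<theta>star \<theta> / real a ^ (dist_g E v i + 1))"
  using AE_iid_in_set[OF supp[of \<theta>star]] AE_log_lik_ratio_growth[where L = L and p = \<theta>star, OF fin_S supp]
  unfolding iid_law_def
proof eventually_elim
  case (elim \<omega>)
  interpret learning_run L S E a pi0 mu0 \<omega> \<theta>star
    using elim pos_lik pi0_pos pi0_sum mu0_pos a2 KL_nonneg[OF fin_S supp pos_lik]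
    by unfold_locales (auto simp: iid_law_def)
  show ?case
    using liminf_neg_ln_mub_ge[OF _ relpow_dist_g[OF sc]] v_inf by (simp add: informative_def)
qed

end
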